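(* Let $\mathcal{V}$ be a finite vocabulary, fix a decoding context $c$, and let $P(\cdot\mid c)$ be a probability distribution on $\mathcal{V}$ with $p_t := P(t\mid c) > 0$ for all $t \in \mathcal{V}$. Let $\mathcal{V}$ be partitioned into $n \ge 1$ buckets, and let the required bucket $B$ be drawn uniformly at random from the $n$ buckets. Let $t^\star$ denote the token of highest $P(\cdot\mid c)$-probability within the required bucket $B$ (so $t^\star$ is a random token determined by $B$). For each possible value of $t^\star$, let $Q(\cdot\mid c)$ be any probability distribution on $\mathcal{V}$ satisfying $Q(t^\star\mid c) \ge Q(t\mid c)$ for all $t \in \mathcal{V}$, and let $Z_{t^\star}$ be defined as in the context below. Then \[ \mathbb{E}_{t^\star}\bigl[D_{\mathrm{KL}}(Q(\cdot\mid c)\,\|\,P(\cdot\mid c))\bigr] \;\ge\; \frac{n-1}{n}\,\mathbb{E}_{t^\star}\bigl[\log(1/Z_{t^\star})\bigr], \] where $Z_{t^\star} = (k+1)r + \sum_{t \in \mathcal{U}} p_t$ and $r = \bigl(p_{t^\star}\prod_{t \in \mathcal{C}} p_t\bigr)^{1/(k+1)}$ is the geometric mean of the pooled probabilities.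
   Context: $D_{\mathrm{KL}}(Q\|P) = \sum_{t} Q(t)\log\frac{Q(t)}{P(t)}$ (natural logarithm). For a fixed token $t^\star$, let $Q^*$ be the distribution minimizing $D_{\mathrm{KL}}(Q\|P(\cdot\mid c))$ over all probability distributions $Q$ on $\mathcal{V}$ with $Q(t^\star) \ge Q(t)$ for all $t\in\mathcal{V}$ (i.e., $t^\star$ is an argmax of $Q$). The "pooled" set is $\mathcal{C} := \{t \neq t^\star : Q^*(t) = Q^*(t^\star)\}$, with $k := |\mathcal{C}|$, and the "unpooled" set is $\mathcal{U} := \{t \neq t^\star : Q^*(t) < Q^*(t^\star)\}$. The quantities $r$ and $Z_{t^\star}$ are computed from these sets for the given $t^\star$. The expectation $\mathbb{E}_{t^\star}$ is over the uniformly random required bucket. *)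

theory Defs
  imports Complex_Main
begin

text \<open>Probability distributions on a finite vocabulary V, represented as
  real-valued functions (values outside V are irrelevant for KL).\<close>

definition is_dist :: "'a set \<Rightarrow> ('a \<Rightarrow> real) \<Rightarrow> bool" where
  "is_dist V Q \<longleftrightarrow> (\<forall>t\<in>V. 0 \<le> Q t) \<and> (\<Sum>t\<in>V. Q t) = 1"

definition KL :: "'a set \<Rightarrow> ('a \<Rightarrow> real) \<Rightarrow> ('a \<Rightarrow> real) \<Rightarrow> real" where
  "KL V Q P = (\<Sum>t\<in>V. if Q t = 0 then 0 else Q t * ln (Q t / P t))"

definition argmax_feasible :: "'a set \<Rightarrow> 'a \<Rightarrow> ('a \<Rightarrow> real) set" where
  "argmax_feasible V s = {Q. is_dist V Q \<and> (\<forall>t. t \<notin> V \<longrightarrow> Q t = 0) \<and> (\<forall>t\<in>V. Q t \<le> Q s)}"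

text \<open>The KL minimizer Q* (unique by strict convexity).\<close>
definition Qstar :: "'a set \<Rightarrow> ('a \<Rightarrow> real) \<Rightarrow> 'a \<Rightarrow> ('a \<Rightarrow> real)" where
  "Qstar V P s = (THE Q. Q \<in> argmax_feasible V s \<and>
       (\<forall>Q'\<in>argmax_feasible V s. KL V Q P \<le> KL V Q' P))"

definition pooled :: "'a set \<Rightarrow> ('a \<Rightarrow> real) \<Rightarrow> 'a \<Rightarrow> 'a set" where
  "pooled V P s = {t\<in>V. t \<noteq> s \<and> Qstar V P s t = Qstar V P s s}"

definition unpooled :: "'a set \<Rightarrow> ('a \<Rightarrow> real) \<Rightarrow> 'a \<Rightarrow> 'a set" where
  "unpooled V P s = {t\<in>V. t \<noteq> s \<and> Qstar V P s t < Qstar V P s s}"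

definition geo_r :: "'a set \<Rightarrow> ('a \<Rightarrow> real) \<Rightarrow> 'a \<Rightarrow> real" where
  "geo_r V P s = (P s * (\<Prod>t\<in>pooled V P s. P t)) powr (1 / (real (card (pooled V P s)) + 1))"

definition Zt :: "'a set \<Rightarrow> ('a \<Rightarrow> real) \<Rightarrow> 'a \<Rightarrow> real" where
  "Zt V P s = (real (card (pooled V P s)) + 1) * geo_r V P s + (\<Sum>t\<in>unpooled V P s. P t)"

end

theory Submission
  imports Defs "HOL-Analysis.Analysis"
begin

text \<open>The constrained minimiser \<open>Q*\<close> exists and is unique because KL is continuous and
  strictly convex on the compact feasible set, so every feasible \<open>Q\<close> has
  \<open>KL(Q\<parallel>P) \<ge> KL(Q*\<parallel>P)\<close>. Since \<open>Q*\<close> is constant on the block \<open>{t*} \<union> C\<close>, lumping that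
  block into a single atom of mass \<open>(k+1) Q*(t*)\<close> and weight \<open>(k+1) r\<close> rewrites
  \<open>KL(Q*\<parallel>P)\<close> as a relative entropy against the weights \<open>(k+1) r\<close> and \<open>p\<^sub>t\<close> (\<open>t \<in> U\<close>),
  whose total mass is \<open>Z\<close>; Gibbs' inequality then gives \<open>KL(Q*\<parallel>P) \<ge> log (1/Z)\<close>.
  AM-GM, itself Gibbs' inequality for the uniform distribution on the block, gives
  \<open>(k+1) r \<le> p\<^sub>t\<^sub>* + \<Sum>\<^sub>C p\<^sub>t\<close>, hence \<open>Z \<le> 1\<close>: the bound \<open>log (1/Z)\<close> is nonnegative,
  so the factor \<open>(n-1)/n \<le> 1\<close> only weakens it.\<close>

lemma KL_eq_sum: "KL V Q P = (\<Sum>t\<in>V. Q t * ln (Q t / P t))"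
  unfolding KL_def by (intro sum.cong) auto

lemma xlnx_gt_tangent:
  fixes a b c :: real
  assumes "0 \<le> a" "0 < b" "0 < c" "a \<noteq> b * c"
  shows "a * ln c + a - b * c < a * ln (a / b)"
proof (cases "a = 0")
  case True
  then show ?thesis using assms by simp
next
  case False
  then have "0 < a" using assms by simp
  then have "ln (b * c) - ln a < (b * c - a) / a"
    using assms by (intro ln_diff_less) auto
  then have "a * (ln (b * c) - ln a) < b * c - a"
    using \<open>0 < a\<close> by (simp add: field_simps)
  then show ?thesis
    using \<open>0 < a\<close> assms by (simp add: ln_mult_pos ln_divide_pos algebra_simps)
qed

lemma xlnx_ge_tangent:
  fixes a b c :: real
  assumes "0 \<le> a" "0 < b" "0 < c"
  shows "a * ln c + a - b * c \<le> a * ln (a / b)"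
  using xlnx_gt_tangent[OF assms] assms by (cases "a = b * c") auto

lemma xlnx_midpoint_less:
  fixes p x y :: real
  assumes "0 < p" "0 \<le> x" "0 \<le> y" "x \<noteq> y"
  defines "m \<equiv> (x + y) / 2"
  shows "m * ln (m / p) < (x * ln (x / p) + y * ln (y / p)) / 2"
proof -
  have "0 < m" using assms by (auto simp: m_def)
  then have c: "0 < m / p" "p * (m / p) = m" using assms by auto
  have "x * ln (m / p) + x - m < x * ln (x / p)"
    using xlnx_gt_tangent[OF assms(2,1) c(1)] c(2) assms by (auto simp: m_def)
  moreover have "y * ln (m / p) + y - m \<le> y * ln (y / p)"
    using xlnx_ge_tangent[OF assms(3,1) c(1)] c(2) by simp
  moreover have "m * ln (m / p) = (x * ln (m / p) + y * ln (m / p)) / 2"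
    by (simp add: m_def field_simps)
  moreover have "x + y = 2 * m" by (simp add: m_def)
  ultimately show ?thesis by argo
qed

lemma gibbs_inequality:
  fixes x y :: "'i \<Rightarrow> real"
  assumes "finite I" "\<forall>i\<in>I. 0 \<le> x i" "sum x I = 1" "\<forall>i\<in>I. 0 < y i"
  shows "- ln (sum y I) \<le> (\<Sum>i\<in>I. x i * ln (x i / y i))"
proof -
  have "I \<noteq> {}" using \<open>sum x I = 1\<close> by auto
  then have "0 < sum y I" using assms by (intro sum_pos) auto
  define c where "c = 1 / sum y I"
  have "0 < c" "c * sum y I = 1" using \<open>0 < sum y I\<close> by (auto simp: c_def)
  have "(\<Sum>i\<in>I. x i * ln c + x i - y i * c) \<le> (\<Sum>i\<in>I. x i * ln (x i / y i))"
    using assms \<open>0 < c\<close> by (intro sum_mono xlnx_ge_tangent) auto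
  also have "(\<Sum>i\<in>I. x i * ln c + x i - y i * c) = sum x I * ln c + sum x I - sum y I * c"
    by (simp add: sum.distrib sum_subtractf sum_distrib_right)
  also have "\<dots> = ln c"
    using \<open>sum x I = 1\<close> \<open>c * sum y I = 1\<close> by (simp add: mult.commute)
  also have "ln c = - ln (sum y I)"
    using \<open>0 < sum y I\<close> by (simp add: c_def ln_div)
  finally show ?thesis .
qed

lemma sum_const_xlnx_div:
  fixes P :: "'a \<Rightarrow> real" and m G :: real
  assumes "finite A" "A \<noteq> {}" "\<forall>t\<in>A. 0 < P t" "0 < m"
  defines "G \<equiv> (prod P A) powr (1 / card A)"
  shows "(\<Sum>t\<in>A. m * ln (m / P t)) = (card A * m) * ln ((card A * m) / (card A * G))"
proof -
  have "0 < card A" using assms by (simp add: card_gt_0_iff)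
  have "0 < prod P A" using assms by (intro prod_pos) auto
  then have "0 < G" by (simp add: G_def)
  have "ln (prod P A) = (\<Sum>t\<in>A. ln (P t))"
    using assms by (intro ln_prod) auto
  then have "ln G = (\<Sum>t\<in>A. ln (P t)) / card A"
    by (simp add: G_def)
  have "(\<Sum>t\<in>A. m * ln (m / P t)) = (\<Sum>t\<in>A. m * ln m - m * ln (P t))"
    using assms by (intro sum.cong) (auto simp: ln_divide_pos right_diff_distrib)
  also have "\<dots> = card A * m * ln m - m * (\<Sum>t\<in>A. ln (P t))"
    by (simp add: sum_subtractf sum_distrib_left)
  also have "\<dots> = card A * m * (ln m - ln G)"
    using \<open>ln G = _\<close> \<open>0 < card A\<close> by (simp add: field_simps)
  also have "\<dots> = (card A * m) * ln ((card A * m) / (card A * G))"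
    using \<open>0 < G\<close> \<open>0 < m\<close> \<open>0 < card A\<close> by (simp add: ln_div)
  finally show ?thesis .
qed

lemma geometric_mean_le_arithmetic_mean:
  fixes P :: "'a \<Rightarrow> real"
  assumes "finite A" "A \<noteq> {}" "\<forall>t\<in>A. 0 < P t"
  shows "card A * (prod P A) powr (1 / card A) \<le> sum P A"
proof -
  define n where "n = real (card A)"
  have "0 < n" using assms by (simp add: n_def card_gt_0_iff)
  have "0 < prod P A" using assms by (intro prod_pos) auto
  have "- ln (sum P A) \<le> (\<Sum>t\<in>A. 1 / n * ln (1 / n / P t))"
    using assms \<open>0 < n\<close> by (intro gibbs_inequality) (auto simp: n_def)
  also have "\<dots> = - ln (n * (prod P A) powr (1 / n))"
    using sum_const_xlnx_div[OF assms, of "1 / n"] \<open>0 < n\<close> by (simp add: n_def ln_div)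
  finally have "ln (n * (prod P A) powr (1 / n)) \<le> ln (sum P A)"
    by simp
  moreover have "0 < sum P A"
    using assms by (intro sum_pos) auto
  moreover have "0 < n * (prod P A) powr (1 / n)"
    using \<open>0 < n\<close> \<open>0 < prod P A\<close> by simp
  ultimately show ?thesis
    by (simp add: n_def)
qed

lemma xlnx_tendsto_0: "((\<lambda>x::real. x * ln x) \<longlongrightarrow> 0) (at_right 0)"
proof -
  have "((\<lambda>y::real. - (ln y / y)) \<longlongrightarrow> 0) at_top"
    using tendsto_minus[OF ln_x_over_x_tendsto_0] by simp
  moreover have "\<forall>\<^sub>F y in at_top. - (ln y / y) = inverse y * ln (inverse (y::real))"
    by (intro always_eventually allI) (metis ln_inverse divide_inverse mult.commute mult_minus_right)
  ultimately have "((\<lambda>y::real. inverse y * ln (inverse y)) \<longlongrightarrow> 0) at_top"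
    by (rule Lim_transform_eventually)
  then show ?thesis
    by (simp add: filterlim_at_right_to_top)
qed

lemma continuous_on_xlnx_div:
  fixes p :: real
  assumes "0 < p"
  shows "continuous_on {0..} (\<lambda>x. x * ln (x / p))"
proof -
  have "continuous (at x within {0..}) (\<lambda>x. x * ln (x / p))" if "0 \<le> x" for x
  proof (cases "x = 0")
    case True
    have "((\<lambda>x. x * ln x - x * ln p) \<longlongrightarrow> 0 - 0 * ln p) (at_right 0)"
      by (intro tendsto_intros xlnx_tendsto_0)
    then have "((\<lambda>x. x * ln x - x * ln p) \<longlongrightarrow> 0) (at_right 0)"
      by simp
    moreover have "\<forall>\<^sub>F x in at_right 0. x * ln x - x * ln p = x * ln (x / p)"
      using assms by (intro eventually_mono[OF eventually_at_right_less])
        (simp add: ln_divide_pos right_diff_distrib)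
    ultimately have "((\<lambda>x. x * ln (x / p)) \<longlongrightarrow> 0) (at_right 0)"
      by (rule Lim_transform_eventually)
    then show ?thesis
      using True by (simp add: continuous_within at_within_Ici_at_right)
  next
    case False
    then have "isCont (\<lambda>x. x * ln (x / p)) x"
      using that assms by (intro isCont_mult continuous_ident isCont_ln'[OF isCont_divide]) auto
    then show ?thesis
      by (rule continuous_at_imp_continuous_at_within)
  qed
  then show ?thesis by (simp add: continuous_on_eq_continuous_within)
qed

lemma argmax_feasible_compact:
  assumes "finite V"
  shows "compact (argmax_feasible V s)"
proof -
  define K where "K = PiE UNIV (\<lambda>t. if t \<in> V then {0..1} else {0::real})"
  have "compactin (product_topology (\<lambda>_. euclidean) UNIV) K"
    unfolding K_def compactin_PiE by auto
  then have "compact K" by (simp add: euclidean_product_topology)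
  have coord: "continuous_on UNIV (\<lambda>Q::'a \<Rightarrow> real. Q t)" for t
    by simp
  have "closed (argmax_feasible V s)"
  proof -
    have "argmax_feasible V s = (\<Inter>t\<in>V. {Q. 0 \<le> Q t}) \<inter> {Q. sum Q V = 1} \<inter>
        (\<Inter>t\<in>-V. {Q. Q t = 0}) \<inter> (\<Inter>t\<in>V. {Q. Q t \<le> Q s})"
      unfolding argmax_feasible_def is_dist_def by auto
    then show ?thesis
      by (simp only:) (intro closed_INT closed_Int ballI closed_Collect_le closed_Collect_eq
          continuous_on_sum coord continuous_on_const)
  qed
  moreover have "argmax_feasible V s \<subseteq> K"
  proof
    fix Q assume Q: "Q \<in> argmax_feasible V s"
    have "Q t \<le> sum Q V" if "t \<in> V" for t
      using Q that assms by (intro member_le_sum) (auto simp: argmax_feasible_def is_dist_def)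
    then show "Q \<in> K"
      using Q by (auto simp: K_def argmax_feasible_def is_dist_def)
  qed
  ultimately show ?thesis
    using compact_Int_closed[OF \<open>compact K\<close>] by (metis inf.absorb_iff2)
qed

lemma continuous_on_KL:
  assumes "\<forall>t\<in>V. 0 < P t"
  shows "continuous_on (argmax_feasible V s) (\<lambda>Q. KL V Q P)"
  unfolding KL_eq_sum
proof (intro continuous_on_sum)
  fix t assume "t \<in> V"
  show "continuous_on (argmax_feasible V s) (\<lambda>Q. Q t * ln (Q t / P t))"
  proof (rule continuous_on_compose2[OF continuous_on_xlnx_div])
    show "0 < P t" using assms \<open>t \<in> V\<close> by simp
    show "(\<lambda>Q. Q t) ` argmax_feasible V s \<subseteq> {0..}"
      using \<open>t \<in> V\<close> by (auto simp: argmax_feasible_def is_dist_def)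
  qed (rule continuous_on_subset[OF continuous_on_product_coordinates], simp)
qed

lemma KL_midpoint_less:
  assumes "finite V" "\<forall>t\<in>V. 0 < P t" "\<forall>t\<in>V. 0 \<le> Q1 t" "\<forall>t\<in>V. 0 \<le> Q2 t"
    and "t0 \<in> V" "Q1 t0 \<noteq> Q2 t0"
  shows "KL V (\<lambda>t. (Q1 t + Q2 t) / 2) P < (KL V Q1 P + KL V Q2 P) / 2"
proof -
  have "KL V (\<lambda>t. (Q1 t + Q2 t) / 2) P
      < (\<Sum>t\<in>V. (Q1 t * ln (Q1 t / P t) + Q2 t * ln (Q2 t / P t)) / 2)"
    unfolding KL_eq_sum
  proof (rule sum_strict_mono_ex1[OF \<open>finite V\<close>])
    have "(Q1 t + Q2 t) / 2 * ln ((Q1 t + Q2 t) / 2 / P t)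
        \<le> (Q1 t * ln (Q1 t / P t) + Q2 t * ln (Q2 t / P t)) / 2" if "t \<in> V" for t
      using xlnx_midpoint_less[of "P t" "Q1 t" "Q2 t"] assms that by (cases "Q1 t = Q2 t") auto
    then show "\<forall>t\<in>V. (Q1 t + Q2 t) / 2 * ln ((Q1 t + Q2 t) / 2 / P t)
        \<le> (Q1 t * ln (Q1 t / P t) + Q2 t * ln (Q2 t / P t)) / 2" by blast
    show "\<exists>t\<in>V. (Q1 t + Q2 t) / 2 * ln ((Q1 t + Q2 t) / 2 / P t)
        < (Q1 t * ln (Q1 t / P t) + Q2 t * ln (Q2 t / P t)) / 2"
      using xlnx_midpoint_less[of "P t0" "Q1 t0" "Q2 t0"] assms by blast
  qed
  also have "\<dots> = (KL V Q1 P + KL V Q2 P) / 2"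
    unfolding KL_eq_sum by (simp add: sum_divide_distrib[symmetric] sum.distrib)
  finally show ?thesis .
qed

lemma argmax_feasible_midpoint:
  assumes "Q1 \<in> argmax_feasible V s" "Q2 \<in> argmax_feasible V s"
  shows "(\<lambda>t. (Q1 t + Q2 t) / 2) \<in> argmax_feasible V s"
proof -
  have "(\<Sum>t\<in>V. (Q1 t + Q2 t) / 2) = (sum Q1 V + sum Q2 V) / 2"
    by (simp add: sum_divide_distrib[symmetric] sum.distrib)
  then show ?thesis
    using assms by (auto simp: argmax_feasible_def is_dist_def add_mono)
qed

lemma argmax_feasible_pos:
  assumes "Q \<in> argmax_feasible V s"
  shows "0 < Q s"
proof (rule ccontr)
  assume "\<not> 0 < Q s"
  then have "sum Q V \<le> 0"
    using assms by (intro sum_nonpos) (force simp: argmax_feasible_def)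
  then show False
    using assms by (simp add: argmax_feasible_def is_dist_def)
qed

lemma KL_ex1_argmax_minimizer:
  assumes "finite V" "s \<in> V" "\<forall>t\<in>V. 0 < P t"
  shows "\<exists>!Q. Q \<in> argmax_feasible V s \<and> (\<forall>Q'\<in>argmax_feasible V s. KL V Q P \<le> KL V Q' P)"
proof (rule ex_ex1I)
  have "(\<lambda>t. if t = s then 1 else 0) \<in> argmax_feasible V s"
    using assms by (auto simp: argmax_feasible_def is_dist_def)
  then show "\<exists>Q. Q \<in> argmax_feasible V s \<and> (\<forall>Q'\<in>argmax_feasible V s. KL V Q P \<le> KL V Q' P)"
    using continuous_attains_inf[OF argmax_feasible_compact[OF assms(1)] _ continuous_on_KL[OF assms(3)]]
    by blast
next
  fix Q1 Q2
  assume Q1: "Q1 \<in> argmax_feasible V s \<and> (\<forall>Q'\<in>argmax_feasible V s. KL V Q1 P \<le> KL V Q' P)"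
    and Q2: "Q2 \<in> argmax_feasible V s \<and> (\<forall>Q'\<in>argmax_feasible V s. KL V Q2 P \<le> KL V Q' P)"
  show "Q1 = Q2"
  proof (rule ccontr)
    assume "Q1 \<noteq> Q2"
    moreover have "Q1 t = Q2 t" if "t \<notin> V" for t
      using Q1 Q2 that by (simp add: argmax_feasible_def)
    ultimately obtain t0 where "t0 \<in> V" "Q1 t0 \<noteq> Q2 t0" by blast
    then have less: "KL V (\<lambda>t. (Q1 t + Q2 t) / 2) P < (KL V Q1 P + KL V Q2 P) / 2"
      using Q1 Q2 assms by (intro KL_midpoint_less) (auto simp: argmax_feasible_def is_dist_def)
    have mid: "(\<lambda>t. (Q1 t + Q2 t) / 2) \<in> argmax_feasible V s"
      using Q1 Q2 by (intro argmax_feasible_midpoint) auto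
    have "KL V Q1 P \<le> KL V (\<lambda>t. (Q1 t + Q2 t) / 2) P"
      using conjunct2[OF Q1] mid by (rule bspec)
    moreover have "KL V Q2 P \<le> KL V (\<lambda>t. (Q1 t + Q2 t) / 2) P"
      using conjunct2[OF Q2] mid by (rule bspec)
    ultimately show False
      using less by argo
  qed
qed

lemma Qstar_argmax_feasible:
  assumes "finite V" "s \<in> V" "\<forall>t\<in>V. 0 < P t"
  shows "Qstar V P s \<in> argmax_feasible V s"
  using theI'[OF KL_ex1_argmax_minimizer[OF assms]] by (simp add: Qstar_def)

lemma KL_Qstar_le:
  assumes "finite V" "s \<in> V" "\<forall>t\<in>V. 0 < P t"
    and "is_dist V Q" "\<forall>t\<in>V. Q t \<le> Q s"
  shows "KL V (Qstar V P s) P \<le> KL V Q P"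
proof -
  define Q0 where "Q0 = (\<lambda>t. if t \<in> V then Q t else 0)"
  have "Q0 \<in> argmax_feasible V s"
    using assms by (auto simp: Q0_def argmax_feasible_def is_dist_def)
  then have "KL V (Qstar V P s) P \<le> KL V Q0 P"
    using theI'[OF KL_ex1_argmax_minimizer[OF assms(1-3)]] by (simp add: Qstar_def)
  also have "KL V Q0 P = KL V Q P"
    unfolding KL_def Q0_def by (intro sum.cong) auto
  finally show ?thesis .
qed

lemma sum_Qstar_partition:
  fixes f :: "'a \<Rightarrow> real"
  assumes "finite V" "s \<in> V" "\<forall>t\<in>V. 0 < P t"
  shows "sum f V = f s + sum f (pooled V P s) + sum f (unpooled V P s)"
proof -
  define C where "C = pooled V P s"
  define U where "U = unpooled V P s"
  have "Qstar V P s t \<le> Qstar V P s s" if "t \<in> V" for t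
    using Qstar_argmax_feasible[OF assms] that by (simp add: argmax_feasible_def)
  then have "V = insert s (C \<union> U)"
    using \<open>s \<in> V\<close> by (force simp: C_def U_def pooled_def unpooled_def)
  moreover have "finite C" "finite U" "s \<notin> C \<union> U" "C \<inter> U = {}"
    using \<open>finite V\<close> by (auto simp: C_def U_def pooled_def unpooled_def)
  ultimately have "sum f V = f s + sum f (C \<union> U)"
    by (metis finite_UnI sum.insert)
  also have "sum f (C \<union> U) = sum f C + sum f U"
    using \<open>finite C\<close> \<open>finite U\<close> \<open>C \<inter> U = {}\<close> by (rule sum.union_disjoint)
  finally show ?thesis
    by (simp add: C_def U_def)
qed

lemma geo_r_pos:
  assumes "finite V" "s \<in> V" "\<forall>t\<in>V. 0 < P t"
  shows "0 < geo_r V P s"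
proof -
  have "0 < P s" "0 < prod P (pooled V P s)"
    using assms by (auto intro!: prod_pos simp: pooled_def)
  then show ?thesis
    unfolding geo_r_def by simp
qed

lemma Zt_pos:
  assumes "finite V" "s \<in> V" "\<forall>t\<in>V. 0 < P t"
  shows "0 < Zt V P s"
proof -
  have "0 \<le> sum P (unpooled V P s)"
    using assms by (intro sum_nonneg) (auto simp: unpooled_def less_imp_le)
  then show ?thesis
    using geo_r_pos[OF assms] unfolding Zt_def by (intro add_pos_nonneg) simp_all
qed

lemma Zt_le_one:
  assumes "finite V" "s \<in> V" "\<forall>t\<in>V. 0 < P t" "is_dist V P"
  shows "Zt V P s \<le> 1"
proof -
  define C where "C = pooled V P s"
  have "finite C" "s \<notin> C" "C \<subseteq> V"
    using assms by (auto simp: C_def pooled_def)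
  then have "card (insert s C) * (prod P (insert s C)) powr (1 / card (insert s C))
      \<le> sum P (insert s C)"
    using assms by (intro geometric_mean_le_arithmetic_mean) auto
  then have "(real (card C) + 1) * geo_r V P s \<le> P s + sum P C"
    using \<open>finite C\<close> \<open>s \<notin> C\<close> by (simp add: geo_r_def C_def add.commute)
  moreover have "sum P V = 1"
    using assms by (simp add: is_dist_def)
  ultimately show ?thesis
    using sum_Qstar_partition[OF assms(1-3), of P] by (simp add: Zt_def C_def)
qed

lemma KL_Qstar_lumped:
  assumes "finite V" "s \<in> V" "\<forall>t\<in>V. 0 < P t"
  defines "q \<equiv> Qstar V P s" and "k \<equiv> real (card (pooled V P s)) + 1"
  shows "KL V q P = (k * q s) * ln ((k * q s) / (k * geo_r V P s))
           + (\<Sum>t\<in>unpooled V P s. q t * ln (q t / P t))"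
proof -
  define C where "C = pooled V P s"
  have "finite C" "s \<notin> C" "C \<subseteq> V"
    using assms by (auto simp: C_def pooled_def)
  have q_C: "q t = q s" if "t \<in> C" for t
    using that by (simp add: C_def pooled_def q_def)
  have "0 < q s"
    using argmax_feasible_pos[OF Qstar_argmax_feasible[OF assms(1-3)]] by (simp add: q_def)
  have "(k * q s) * ln ((k * q s) / (k * geo_r V P s)) = (\<Sum>t\<in>insert s C. q s * ln (q s / P t))"
    using sum_const_xlnx_div[of "insert s C" P "q s"] assms \<open>finite C\<close> \<open>s \<notin> C\<close> \<open>C \<subseteq> V\<close> \<open>0 < q s\<close>
    by (auto simp: k_def geo_r_def C_def add.commute subset_iff)
  also have "\<dots> = q s * ln (q s / P s) + (\<Sum>t\<in>C. q t * ln (q t / P t))"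
    using \<open>finite C\<close> \<open>s \<notin> C\<close> q_C by (simp add: sum.insert cong: sum.cong)
  finally show ?thesis
    using sum_Qstar_partition[OF assms(1-3), of "\<lambda>t. q t * ln (q t / P t)"]
    by (simp add: KL_eq_sum C_def)
qed

lemma Qstar_lumped_mass:
  assumes "finite V" "s \<in> V" "\<forall>t\<in>V. 0 < P t"
  defines "q \<equiv> Qstar V P s" and "k \<equiv> real (card (pooled V P s)) + 1"
  shows "k * q s + sum q (unpooled V P s) = 1"
proof -
  have "sum q (pooled V P s) = (\<Sum>t\<in>pooled V P s. q s)"
    by (intro sum.cong) (simp_all add: pooled_def q_def)
  then have "sum q (pooled V P s) = real (card (pooled V P s)) * q s"
    by simp
  moreover have "sum q V = 1"
    using Qstar_argmax_feasible[OF assms(1-3)]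
    by (simp add: q_def argmax_feasible_def is_dist_def)
  ultimately show ?thesis
    using sum_Qstar_partition[OF assms(1-3), of q] by (simp add: k_def algebra_simps)
qed

lemma neg_ln_Zt_le_KL_Qstar:
  assumes "finite V" "s \<in> V" "\<forall>t\<in>V. 0 < P t"
  shows "- ln (Zt V P s) \<le> KL V (Qstar V P s) P"
proof -
  define q where "q = Qstar V P s"
  define U where "U = unpooled V P s"
  define k where "k = real (card (pooled V P s)) + 1"
  define a where "a = k * geo_r V P s"
  define x where "x = q(s := k * q s)"
  define y where "y = P(s := a)"
  have "finite U" "s \<notin> U" "U \<subseteq> V"
    using assms by (auto simp: U_def unpooled_def)
  have x_U: "x t = q t" and y_U: "y t = P t" if "t \<in> U" for t
    using that \<open>s \<notin> U\<close> by (auto simp: x_def y_def)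
  have "sum x (insert s U) = k * q s + sum q U"
    using \<open>finite U\<close> \<open>s \<notin> U\<close> x_U by (simp add: x_def cong: sum.cong)
  then have "sum x (insert s U) = 1"
    using Qstar_lumped_mass[OF assms] by (simp add: q_def k_def U_def)
  moreover have "sum y (insert s U) = Zt V P s"
    using \<open>finite U\<close> \<open>s \<notin> U\<close> y_U by (simp add: y_def a_def k_def Zt_def U_def cong: sum.cong)
  moreover have "(\<Sum>t\<in>insert s U. x t * ln (x t / y t)) = KL V q P"
    using \<open>finite U\<close> \<open>s \<notin> U\<close> x_U y_U KL_Qstar_lumped[OF assms]
    by (simp add: x_def y_def a_def q_def k_def U_def cong: sum.cong)
  moreover have "0 < q s" "0 < a"
    using argmax_feasible_pos[OF Qstar_argmax_feasible[OF assms]] geo_r_pos[OF assms]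
    by (simp_all add: q_def a_def k_def)
  then have "\<forall>t\<in>insert s U. 0 \<le> x t" "\<forall>t\<in>insert s U. 0 < y t"
    using Qstar_argmax_feasible[OF assms] \<open>U \<subseteq> V\<close> assms x_U y_U
    by (auto simp: x_def y_def k_def q_def argmax_feasible_def is_dist_def)
  ultimately show ?thesis
    using gibbs_inequality[of "insert s U" x y] \<open>finite U\<close> by (simp add: q_def)
qed

theorem theorem7p1:
  fixes V :: "'a set" and P :: "'a \<Rightarrow> real" and n :: nat
    and B :: "nat \<Rightarrow> 'a set" and tstar :: "nat \<Rightarrow> 'a"
    and Q :: "'a \<Rightarrow> 'a \<Rightarrow> real"
  assumes finV: "finite V"
    and Ppos: "\<forall>t\<in>V. 0 < P t"
    and Pdist: "is_dist V P"
    and n_ge: "n \<ge> 1"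
    and B_ne: "\<forall>i<n. B i \<noteq> {}"
    and B_disj: "\<forall>i<n. \<forall>j<n. i \<noteq> j \<longrightarrow> B i \<inter> B j = {}"
    and B_cover: "(\<Union>i<n. B i) = V"
    and tstar_mem: "\<forall>i<n. tstar i \<in> B i"
    and tstar_max: "\<forall>i<n. \<forall>t\<in>B i. P t \<le> P (tstar i)"
    and Q_dist: "\<forall>i<n. is_dist V (Q (tstar i))"
    and Q_argmax: "\<forall>i<n. \<forall>t\<in>V. Q (tstar i) t \<le> Q (tstar i) (tstar i)"
  shows "(\<Sum>i<n. KL V (Q (tstar i)) P) / real n
           \<ge> (real n - 1) / real n * ((\<Sum>i<n. ln (1 / Zt V P (tstar i))) / real n)"
proof -
  \<comment> \<open>The bound holds bucket by bucket.\<close>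
  have bound: "0 \<le> ln (1 / Zt V P (tstar i)) \<and> ln (1 / Zt V P (tstar i)) \<le> KL V (Q (tstar i)) P"
    if "i < n" for i
  proof -
    have s: "tstar i \<in> V"
      using tstar_mem B_cover that by blast
    have "0 < Zt V P (tstar i)" "Zt V P (tstar i) \<le> 1"
      using Zt_pos[OF finV s Ppos] Zt_le_one[OF finV s Ppos Pdist] .
    moreover have "- ln (Zt V P (tstar i)) \<le> KL V (Q (tstar i)) P"
      using neg_ln_Zt_le_KL_Qstar[OF finV s Ppos] KL_Qstar_le[OF finV s Ppos] Q_dist Q_argmax that
      by (meson order_trans)
    ultimately show ?thesis
      by (simp add: ln_div)
  qed
  define L where "L = (\<Sum>i<n. ln (1 / Zt V P (tstar i)))"
  define K where "K = (\<Sum>i<n. KL V (Q (tstar i)) P)"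
  have "0 \<le> L" "L \<le> K"
    unfolding L_def K_def using bound by (auto intro: sum_nonneg sum_mono)
  have "(real n - 1) / real n * (L / real n) \<le> L / real n"
    using \<open>0 \<le> L\<close> n_ge by (intro mult_left_le_one_le) auto
  also have "\<dots> \<le> K / real n"
    using \<open>L \<le> K\<close> by (simp add: divide_right_mono)
  finally show ?thesis
    by (simp add: L_def K_def)
qed

end
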